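(* Let $n\ge3$ and let $D$ be an affine $n$-diagram. If $D$ lies in $O_n$, then for every integer $i$ the number of intersections of $D$ with the line $x=i+\tfrac12$ is even; if $D$ does not lie in $O_n$, then for every integer $i$ this number is odd.
   Context: An affine $n$-diagram consists of the nodes $\mathbb{Z}\times\{0,1\}\subset\mathbb{R}^2$ together with curves called edges such that: every node is an endpoint of exactly one edge; edges lie in $\mathbb{R}\times[0,1]$; an edge not joining two nodes is an infinite horizontal line meeting no node, and there are finitely many such; no two edges intersect; the diagram is invariant under horizontal translation by $n$. Diagrams are taken up to isotopy. The number of intersections of a diagram $D$ with the line $x=i+\tfrac12$ means the minimal number of intersection points over all diagrams isotopic to $D$. For a commutative ring $R$ with an invertible element $v$, $D_n$ is the $R$-algebra with basis the affine $n$-diagrams (product: stack, remove $x$ closed loops, multiply by $(v+v^{-1})^x$), and $O_n$ is the $R$-span of the diagrams for which the number of intersections with $x=i+\tfrac12$ is even for every integer $i$; a diagram "lies in $O_n$" if it is one of these. *)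

theory Defs
  imports Main
begin

text \<open>A node is (x, top) with x an integer, top = True meaning the node (x,1),
  top = False meaning (x,0).  A diagram up to isotopy is determined by the
  partner function M (each node is joined to exactly one other node) and the
  number h of infinite horizontal lines.\<close>

type_synonym node = "int \<times> bool"

definition affine_diagram :: "nat \<Rightarrow> (node \<Rightarrow> node) \<Rightarrow> nat \<Rightarrow> bool" where
  "affine_diagram n M h \<longleftrightarrow>
     n \<ge> 1 \<and>
     \<comment> \<open>every node is the endpoint of exactly one edge\<close>
     (\<forall>p. M (M p) = p \<and> M p \<noteq> p) \<and>
     \<comment> \<open>invariance under horizontal translation by n\<close>
     (\<forall>a r. M (a + int n, r) = (fst (M (a, r)) + int n, snd (M (a, r)))) \<and>
     \<comment> \<open>no crossings: a cup/cap encloses only cups/caps\<close>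
     (\<forall>p c. snd (M p) = snd p \<and> fst p < c \<and> c < fst (M p) \<longrightarrow>
        snd (M (c, snd p)) = snd p \<and> fst p < fst (M (c, snd p)) \<and> fst (M (c, snd p)) < fst (M p)) \<and>
     \<comment> \<open>no crossings: through strands preserve order\<close>
     (\<forall>a b. snd (M (a, True)) = False \<and> snd (M (b, True)) = False \<and> a < b \<longrightarrow>
        fst (M (a, True)) < fst (M (b, True))) \<and>
     \<comment> \<open>a horizontal line separates top from bottom\<close>
     (h > 0 \<longrightarrow> (\<forall>p. snd (M p) = snd p))"

definition diagram_edges :: "(node \<Rightarrow> node) \<Rightarrow> node set set" where
  "diagram_edges M = {{p, M p} | p. True}"

text \<open>Minimal number of intersections of an edge between nodes with the line
  x = i + 1/2: one if the edge has endpoints on both sides, zero otherwise.\<close>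
definition edge_crosses :: "node set \<Rightarrow> int \<Rightarrow> bool" where
  "edge_crosses e i \<longleftrightarrow> (\<exists>p\<in>e. fst p \<le> i) \<and> (\<exists>q\<in>e. i < fst q)"

text \<open>Number of intersections of the diagram (M,h) with the line x = i + 1/2;
  each horizontal line meets it exactly once.\<close>
definition intersections :: "(node \<Rightarrow> node) \<Rightarrow> nat \<Rightarrow> int \<Rightarrow> nat" where
  "intersections M h i = card {e \<in> diagram_edges M. edge_crosses e i} + h"

definition in_O :: "(node \<Rightarrow> node) \<Rightarrow> nat \<Rightarrow> bool" where
  "in_O M h \<longleftrightarrow> (\<forall>i. even (intersections M h i))"

end

theory Submission
  imports Defs
begin

text \<open>Moving the line from
  x = i + 1/2 to x = i + 3/2 only affects edges with an endpoint in column i + 1: if the two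
  nodes of that column are joined to each other nothing changes, and otherwise each of them
  adds or removes one crossing edge.  Hence the parity of the intersection number does not
  depend on i.  Periodicity bounds the length of the edges, which keeps all counts finite.\<close>

definition crossing_nodes :: "(node \<Rightarrow> node) \<Rightarrow> int \<Rightarrow> node set" where
  "crossing_nodes M i = {p. fst p \<le> i \<and> i < fst (M p)}"

lemma card_crossing_edges:
  assumes inv: "\<And>p. M (M p) = p"
  shows "card {e \<in> diagram_edges M. edge_crosses e i} = card (crossing_nodes M i)"
proof -
  have "bij_betw (\<lambda>p. {p, M p}) (crossing_nodes M i) {e \<in> diagram_edges M. edge_crosses e i}"
  proof (rule bij_betwI')
    fix p q assume "p \<in> crossing_nodes M i" "q \<in> crossing_nodes M i"
    then show "({p, M p} = {q, M q}) = (p = q)"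
      unfolding crossing_nodes_def by (auto simp: doubleton_eq_iff)
  next
    fix p assume "p \<in> crossing_nodes M i"
    then show "{p, M p} \<in> {e \<in> diagram_edges M. edge_crosses e i}"
      unfolding crossing_nodes_def diagram_edges_def edge_crosses_def by (cases p) auto
  next
    fix e assume "e \<in> {e \<in> diagram_edges M. edge_crosses e i}"
    then obtain p where e: "e = {p, M p}" and crosses: "edge_crosses e i"
      unfolding diagram_edges_def by auto
    show "\<exists>p\<in>crossing_nodes M i. e = {p, M p}"
    proof (cases "fst p \<le> i")
      case True
      then have "p \<in> crossing_nodes M i"
        using crosses e unfolding edge_crosses_def crossing_nodes_def by auto
      then show ?thesis using e by blast
    next
      case False
      then have "M p \<in> crossing_nodes M i"
        using crosses e inv unfolding edge_crosses_def crossing_nodes_def by auto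
      moreover have "e = {M p, M (M p)}" using e inv by auto
      ultimately show ?thesis by blast
    qed
  qed
  then show ?thesis by (simp add: bij_betw_same_card[symmetric])
qed

lemma periodic_mod:
  fixes f :: "int \<Rightarrow> 'a"
  assumes periodic: "\<And>a. f (a + c) = f a"
  shows "f a = f (a mod c)"
proof -
  have "f (b + k * c) = f b" for b k
  proof (induction k rule: int_induct[where k = 0])
    case (step1 k)
    then show ?case using periodic[of "b + k * c"] by (simp add: algebra_simps)
  next
    case (step2 k)
    then show ?case using periodic[of "b + (k - 1) * c"] by (simp add: algebra_simps)
  qed simp
  from this[of "a mod c" "a div c"] show ?thesis by (simp add: mod_div_mult_eq)
qed

lemma affine_diagram_edge_length_bounded:
  assumes "affine_diagram n M h"
  obtains L where "\<And>p. \<bar>fst (M p) - fst p\<bar> \<le> L"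
proof -
  define \<delta> where "\<delta> a r = fst (M (a, r)) - a" for a r
  let ?lengths = "(\<lambda>(a, r). \<bar>\<delta> a r\<bar>) ` ({0..<int n} \<times> UNIV)"
  have n: "n \<ge> 1" and shift: "\<And>a r. M (a + int n, r) = (fst (M (a, r)) + int n, snd (M (a, r)))"
    using assms unfolding affine_diagram_def by blast+
  have "\<delta> a r = \<delta> (a mod int n) r" for a r
    by (rule periodic_mod) (simp add: \<delta>_def shift)
  then have "\<bar>\<delta> a r\<bar> \<in> ?lengths" for a r
    using n by (auto intro!: image_eqI[where x = "(a mod int n, r)"])
  then have "\<bar>fst (M (a, r)) - a\<bar> \<le> Max ?lengths" for a r
    unfolding \<delta>_def by (intro Max_ge) auto
  then show thesis using that by (metis prod.collapse)
qed

lemma finite_crossing_nodes: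
  assumes "\<And>p. \<bar>fst (M p) - fst p\<bar> \<le> L"
  shows "finite (crossing_nodes M i)"
proof (rule finite_subset)
  show "crossing_nodes M i \<subseteq> {i - L..i} \<times> UNIV"
  proof
    fix p assume "p \<in> crossing_nodes M i"
    then show "p \<in> {i - L..i} \<times> UNIV"
      using assms[of p] unfolding crossing_nodes_def by (cases p) auto
  qed
qed simp

lemma partner_in_same_column:
  assumes "\<And>p. M p \<noteq> p" and "fst (M (c, r)) = c"
  shows "M (c, r) = (c, \<not> r)"
  using assms(1)[of "(c, r)"] assms(2) by (cases "M (c, r)") auto

lemma even_card_partner_outside_column:
  fixes M :: "node \<Rightarrow> node"
  assumes inv: "\<And>p. M (M p) = p" and no_fix: "\<And>p. M p \<noteq> p"
  shows "even (card {q. fst q = c \<and> fst (M q) \<noteq> c})"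
proof (cases "fst (M (c, True)) = c")
  case True
  then have "M (c, True) = (c, False)"
    using partner_in_same_column[OF no_fix] by fastforce
  then have "M (c, False) = (c, True)"
    using inv[of "(c, True)"] by simp
  then have "fst (M (c, r)) = c" for r
    using True by (cases r) simp_all
  then have no_partner_outside: "{q. fst q = c \<and> fst (M q) \<noteq> c} = {}"
    by force
  show ?thesis unfolding no_partner_outside by simp
next
  case False
  have "fst (M (c, False)) \<noteq> c"
  proof
    assume "fst (M (c, False)) = c"
    then have "M (c, False) = (c, True)"
      using partner_in_same_column[OF no_fix] by fastforce
    then have "M (c, True) = (c, False)"
      using inv[of "(c, False)"] by simp
    with False show False by simp
  qed
  then have "{q. fst q = c \<and> fst (M q) \<noteq> c} = {(c, True), (c, False)}"
    using False by (auto intro: prod_eqI)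
  then show ?thesis by simp
qed

lemma even_card_crossing_nodes_step:
  assumes inv: "\<And>p. M (M p) = p" and no_fix: "\<And>p. M p \<noteq> p"
    and fin: "finite (crossing_nodes M i)"
  shows "even (card (crossing_nodes M (i + 1))) \<longleftrightarrow> even (card (crossing_nodes M i))"
proof -
  define c where "c = i + 1"
  define column where "column = {(c, True), (c, False)}"
  define crossing_both where "crossing_both = {p. fst p \<le> i \<and> c < fst (M p)}"
  define entering where "entering = {p. fst p \<le> i \<and> fst (M p) = c}"
  define from_left where "from_left = {q \<in> column. fst (M q) < c}"
  define leaving where "leaving = {q \<in> column. c < fst (M q)}"
  have column_eq: "column = {q. fst q = c}"
    unfolding column_def by (auto intro: prod_eqI)
  have crossing_i: "crossing_nodes M i = crossing_both \<union> entering"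
    unfolding crossing_nodes_def crossing_both_def entering_def c_def by auto
  have crossing_c: "crossing_nodes M c = crossing_both \<union> leaving"
    unfolding crossing_nodes_def crossing_both_def leaving_def column_eq c_def by auto
  have entering_eq: "entering = M ` from_left"
    unfolding entering_def from_left_def column_eq c_def
    by (auto simp: inv intro!: image_eqI[where x = "M p" for p])
  have "inj M" by (metis inv injI)
  then have card_entering: "card entering = card from_left"
    by (simp add: entering_eq card_image inj_on_subset)
  have "from_left \<union> leaving = {q. fst q = c \<and> fst (M q) \<noteq> c}"
    unfolding from_left_def leaving_def column_eq by auto
  then have "even (card (from_left \<union> leaving))"
    using even_card_partner_outside_column[OF inv no_fix] by simp
  moreover have "card (from_left \<union> leaving) = card from_left + card leaving"
    by (rule card_Un_disjoint) (auto simp: from_left_def leaving_def column_def)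
  moreover have "card (crossing_nodes M i) = card crossing_both + card entering"
    using fin unfolding crossing_i
    by (intro card_Un_disjoint) (auto simp: crossing_both_def entering_def c_def)
  moreover have "card (crossing_nodes M c) = card crossing_both + card leaving"
    using fin unfolding crossing_i crossing_c
    by (intro card_Un_disjoint) (auto simp: crossing_both_def leaving_def column_def c_def)
  ultimately show ?thesis unfolding c_def card_entering by presburger
qed

lemma even_card_crossing_nodes_iff:
  assumes inv: "\<And>p. M (M p) = p" and no_fix: "\<And>p. M p \<noteq> p"
    and fin: "\<And>i. finite (crossing_nodes M i)"
  shows "even (card (crossing_nodes M j)) \<longleftrightarrow> even (card (crossing_nodes M i))"
proof (induction j rule: int_induct[where k = i])
  case (step1 j)
  then show ?case using even_card_crossing_nodes_step[OF inv no_fix fin] by simp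
next
  case (step2 j)
  then show ?case using even_card_crossing_nodes_step[OF inv no_fix fin, of "j - 1"] by simp
qed simp

lemma affine_diagram_even_intersections_iff:
  assumes "affine_diagram n M h"
  shows "even (intersections M h j) \<longleftrightarrow> even (intersections M h i)"
proof -
  have inv: "\<And>p. M (M p) = p" and no_fix: "\<And>p. M p \<noteq> p"
    using assms unfolding affine_diagram_def by blast+
  obtain L where "\<And>p. \<bar>fst (M p) - fst p\<bar> \<le> L"
    using affine_diagram_edge_length_bounded[OF assms] by blast
  then have "\<And>i. finite (crossing_nodes M i)" by (rule finite_crossing_nodes)
  then have "even (card (crossing_nodes M j)) \<longleftrightarrow> even (card (crossing_nodes M i))"
    by (rule even_card_crossing_nodes_iff[OF inv no_fix])
  then show ?thesis
    unfolding intersections_def card_crossing_edges[OF inv] by simp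
qed

theorem proposition2p3p4:
  fixes n :: nat and M :: "node \<Rightarrow> node" and h :: nat
  assumes "n \<ge> 3" and "affine_diagram n M h"
  shows "(in_O M h \<longrightarrow> (\<forall>i. even (intersections M h i)))
       \<and> (\<not> in_O M h \<longrightarrow> (\<forall>i. odd (intersections M h i)))"
  using affine_diagram_even_intersections_iff[OF assms(2)] unfolding in_O_def by blast

end
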